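(* Let $S\subset\mathbb{R}^2$, $\alpha>0$, and let $V$ be a unit intensity Poisson process on $\mathbb{R}^2$. Condition on the points of $V\cap(\partial S)^\alpha$. On the event that $S$ is $\alpha$-sealed with respect to $V$, the Voronoi map of $V$ in $S^{-\alpha}$ is determined by the process $V\cap S^\alpha$. Moreover, for every $x\in V\cap S^{-\alpha}$, the Voronoi cell of $x$, as well as all (centers of) neighbors of $x$ in the Delaunay graph, are contained in $S^\alpha$.
   Context: A set $S\subset\mathbb{R}^2$ is $\alpha$-sealed w.r.t. $V$ if $d(x,V)\le\alpha$ for every $x\in\partial S$. For a set $U$, $U^\alpha=\{x\in\mathbb{R}^2: d(x,U)\le\alpha\}$, and $S^{-\alpha}$ is the set of points at distance at least $\alpha$ from the complement $S^c$. The Voronoi cell of $x\in V$ is $C(x)=\{z: d(z,x)=d(z,V)\}$; the Delaunay graph has vertex set $V$ and an edge $(x,y)$ iff $|C(x)\cap C(y)|>1$. *)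

theory Defs
  imports "HOL-Probability.Probability"
begin

type_synonym pt = "real^2"

text \<open>Closed alpha-neighbourhood U^alpha = {x. d(x,U) <= alpha}; empty if U is empty
  (d(x,{}) = +infinity).\<close>
definition thicken :: "real \<Rightarrow> pt set \<Rightarrow> pt set" where
  "thicken \<alpha> U = {x. U \<noteq> {} \<and> infdist x U \<le> \<alpha>}"

definition inner_set :: "real \<Rightarrow> pt set \<Rightarrow> pt set" where
  "inner_set \<alpha> S = {x. \<forall>y. y \<notin> S \<longrightarrow> \<alpha> \<le> dist x y}"

definition sealed :: "real \<Rightarrow> pt set \<Rightarrow> pt set \<Rightarrow> bool" where
  "sealed \<alpha> S V \<longleftrightarrow> (\<forall>x\<in>frontier S. V \<noteq> {} \<and> infdist x V \<le> \<alpha>)"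

definition voronoi_cell :: "pt set \<Rightarrow> pt \<Rightarrow> pt set" where
  "voronoi_cell V x = {z. dist z x = infdist z V}"

definition voronoi_map :: "pt set \<Rightarrow> pt \<Rightarrow> pt set" where
  "voronoi_map V z = {x \<in> V. z \<in> voronoi_cell V x}"

definition delaunay_edge :: "pt set \<Rightarrow> pt \<Rightarrow> pt \<Rightarrow> bool" where
  "delaunay_edge V x y \<longleftrightarrow> x \<in> V \<and> y \<in> V \<and>
     (\<exists>a b. a \<noteq> b \<and> a \<in> voronoi_cell V x \<inter> voronoi_cell V y \<and> b \<in> voronoi_cell V x \<inter> voronoi_cell V y)"

definition poisson_process :: "'a measure \<Rightarrow> ('a \<Rightarrow> pt set) \<Rightarrow> bool" where
  "poisson_process M V \<longleftrightarrow> prob_space M \<and>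
     (\<forall>\<omega>\<in>space M. \<forall>K. bounded K \<longrightarrow> finite (V \<omega> \<inter> K)) \<and>
     (\<forall>A. A \<in> sets lborel \<and> bounded A \<longrightarrow>
        (\<lambda>\<omega>. card (V \<omega> \<inter> A)) \<in> measurable M (count_space UNIV) \<and>
        (\<forall>k::nat. measure M {\<omega>\<in>space M. card (V \<omega> \<inter> A) = k} =
            (measure lborel A) ^ k / fact k * exp (- measure lborel A))) \<and>
     (\<forall>(As :: nat \<Rightarrow> pt set) n. (\<forall>i<n. As i \<in> sets lborel \<and> bounded (As i)) \<and>
         disjoint_family_on As {..<n} \<longrightarrow>
        prob_space.indep_vars M (\<lambda>_. count_space UNIV) (\<lambda>i \<omega>. card (V \<omega> \<inter> As i)) {..<n})"

end

theory Submission
  imports Defs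
begin

text \<open>Let \<open>x \<in> S\<^sup>-\<^sup>\<alpha>\<close> be a centre and \<open>a \<notin> S\<close> a point of its cell. The segment from \<open>x\<close> to \<open>a\<close>
  crosses \<open>\<partial>S\<close> at some \<open>w\<close> with \<open>d(x,w) \<ge> \<alpha>\<close>, and sealing provides a centre within \<open>\<alpha>\<close> of \<open>w\<close>;
  since \<open>x\<close> is a nearest centre of \<open>a\<close>, this forces \<open>d(x, S\<^sup>c) = \<alpha>\<close>. Otherwise cells of centres
  in \<open>S\<^sup>-\<^sup>\<alpha>\<close> lie in \<open>S\<close>, and the same crossing argument shows that every nearest centre of a
  point of \<open>S\<close> lies in \<open>S\<^sup>\<alpha>\<close>; this gives both the locality of the Voronoi map and the claim on
  Delaunay neighbours. The exceptional event has probability zero: in the plane the level set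
  \<open>{d(\<cdot>,K) = \<alpha>}\<close> is locally a Lipschitz graph over a line, hence Lebesgue-null, and a
  Poisson process almost surely has no point in a null set.\<close>

section \<open>Distances to point sets\<close>

lemma locally_finite_imp_closed:
  fixes V :: "'a::metric_space set"
  assumes "\<And>K. bounded K \<Longrightarrow> finite (V \<inter> K)"
  shows "closed V"
  unfolding closed_limpt
proof (intro allI impI)
  fix x assume "x islimpt V"
  then have "infinite (V \<inter> ball x 1)"
    by (simp add: islimpt_eq_infinite_ball)
  moreover have "finite (V \<inter> ball x 1)"
    by (rule assms) simp
  ultimately show "x \<in> V"
    by contradiction
qed

lemma infdist_le_closure:
  assumes "w \<in> closure A"
  shows "infdist x A \<le> dist x w"
proof -
  have "A \<noteq> {}"
    using assms by auto
  then have "infdist w A = 0"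
    using assms in_closure_iff_infdist_zero by blast
  then show ?thesis
    using infdist_triangle[of x A w] by simp
qed

lemma infdist_closure:
  fixes A :: "'a::heine_borel set"
  shows "infdist x (closure A) = infdist x A"
proof (cases "A = {}")
  case False
  then obtain w where w: "w \<in> closure A" "infdist x (closure A) = dist x w"
    using infdist_attains_inf[of "closure A" x] by auto
  show ?thesis
  proof (rule antisym)
    show "infdist x (closure A) \<le> infdist x A"
      using False by (simp add: infdist_mono closure_subset)
    show "infdist x A \<le> infdist x (closure A)"
      using infdist_le_closure[OF w(1)] w(2) by simp
  qed
qed simp

lemma le_infdist_inner_set:
  assumes "x \<in> inner_set \<alpha> S" "S \<noteq> UNIV"
  shows "\<alpha> \<le> infdist x (- S)"
proof -
  have ne: "- S \<noteq> {}"
    using assms(2) by auto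
  show ?thesis
    unfolding infdist_notempty[OF ne]
    using assms(1) ne by (intro cINF_greatest) (auto simp: inner_set_def)
qed

lemma inner_set_subset:
  assumes "0 < \<alpha>"
  shows "inner_set \<alpha> S \<subseteq> S"
  using assms by (auto simp: inner_set_def)

lemma subset_thicken:
  assumes "0 \<le> \<alpha>"
  shows "S \<subseteq> thicken \<alpha> S"
  using assms by (auto simp: thicken_def)

lemma segment_meets_frontier:
  fixes z v :: "'a::euclidean_space"
  assumes "z \<in> S" "v \<notin> S"
  obtains w where "w \<in> frontier S" "dist z v = dist z w + dist w v"
proof -
  have "closed_segment z v \<inter> frontier S \<noteq> {}"
    by (rule connected_Int_frontier) (use assms in auto)
  then obtain w where "w \<in> closed_segment z v" "w \<in> frontier S"
    by auto
  moreover from this(1) have "dist z v = dist z w + dist w v"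
    by (simp flip: between between_mem_segment)
  ultimately show ?thesis
    using that by blast
qed

section \<open>Sealed sets and Voronoi tessellations\<close>

lemma sealed_nearest_centre:
  assumes "sealed \<alpha> S V" "closed V" "w \<in> frontier S"
  obtains v where "v \<in> V" "dist w v \<le> \<alpha>"
proof -
  have "V \<noteq> {}" "infdist w V \<le> \<alpha>"
    using assms(1,3) by (auto simp: sealed_def)
  moreover obtain v where "v \<in> V" "infdist w V = dist w v"
    using infdist_attains_inf[OF assms(2) \<open>V \<noteq> {}\<close>] by blast
  ultimately show ?thesis
    using that by simp
qed

lemma sealed_closer_centre_in_thicken:
  assumes seal: "sealed \<alpha> S V" and V: "closed V" and "0 \<le> \<alpha>"
    and z: "z \<in> S" and v: "v \<in> V" "v \<notin> thicken \<alpha> S"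
  obtains v' where "v' \<in> V" "v' \<in> thicken \<alpha> S" "dist z v' < dist z v"
proof -
  have far: "\<alpha> < infdist v S"
    using v z by (auto simp: thicken_def)
  then have "v \<notin> S"
    using \<open>0 \<le> \<alpha>\<close> by auto
  then obtain w where w: "w \<in> frontier S" "dist z v = dist z w + dist w v"
    using segment_meets_frontier z by blast
  have w_cl: "w \<in> closure S"
    using w(1) by (simp add: frontier_def)
  obtain v' where v': "v' \<in> V" "dist w v' \<le> \<alpha>"
    using sealed_nearest_centre[OF seal V w(1)] .
  have "\<alpha> < dist w v"
    using far infdist_le_closure[OF w_cl, of v] dist_commute[of v w] by linarith
  then have "dist z v' < dist z v"
    using dist_triangle[of z v' w] w(2) v'(2) by linarith
  moreover have "infdist v' S \<le> \<alpha>"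
    using infdist_le_closure[OF w_cl, of v'] v'(2) dist_commute[of v' w] by linarith
  then have "v' \<in> thicken \<alpha> S"
    using z by (auto simp: thicken_def)
  ultimately show ?thesis
    using that v'(1) by blast
qed

lemma sealed_voronoi_centre_in_thicken:
  assumes "sealed \<alpha> S V" "closed V" "0 \<le> \<alpha>" "z \<in> S" "x \<in> V" "z \<in> voronoi_cell V x"
  shows "x \<in> thicken \<alpha> S"
proof (rule ccontr)
  assume "x \<notin> thicken \<alpha> S"
  then obtain v' where "v' \<in> V" "dist z v' < dist z x"
    using sealed_closer_centre_in_thicken[OF assms(1-5)] by blast
  then show False
    using assms(6) infdist_le[of v' V z] by (simp add: voronoi_cell_def)
qed

lemma sealed_infdist_Int_thicken:
  assumes "sealed \<alpha> S V" "closed V" "0 \<le> \<alpha>" "z \<in> S"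
  shows "infdist z (V \<inter> thicken \<alpha> S) = infdist z V"
proof (cases "V = {}")
  case False
  then obtain x where x: "x \<in> V" "infdist z V = dist z x"
    using infdist_attains_inf[OF assms(2)] by blast
  then have "x \<in> V \<inter> thicken \<alpha> S"
    using sealed_voronoi_centre_in_thicken[OF assms] by (simp add: voronoi_cell_def)
  then have "infdist z (V \<inter> thicken \<alpha> S) \<le> infdist z V"
    using x(2) infdist_le by metis
  moreover have "infdist z V \<le> infdist z (V \<inter> thicken \<alpha> S)"
    using \<open>x \<in> V \<inter> thicken \<alpha> S\<close> by (intro infdist_mono) auto
  ultimately show ?thesis
    by simp
qed simp

lemma sealed_voronoi_map_Int_thicken:
  assumes "sealed \<alpha> S V" "closed V" "0 \<le> \<alpha>" "z \<in> S"
  shows "voronoi_map V z = voronoi_map (V \<inter> thicken \<alpha> S) z"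
  using sealed_infdist_Int_thicken[OF assms] sealed_voronoi_centre_in_thicken[OF assms]
  by (auto simp: voronoi_map_def voronoi_cell_def)

text \<open>The hypothesis \<open>infdist x (- S) \<noteq> \<alpha>\<close> cannot be dropped: for \<open>S\<close> the closed \<open>\<alpha>\<close>-ball
  around \<open>x\<close> and \<open>V = {x}\<close>, the set \<open>S\<close> is sealed but the cell of \<open>x\<close> is the whole plane.\<close>

lemma sealed_voronoi_cell_subset:
  assumes seal: "sealed \<alpha> S V" and V: "closed V" and "0 \<le> \<alpha>"
    and x: "x \<in> inner_set \<alpha> S" "infdist x (- S) \<noteq> \<alpha>"
  shows "voronoi_cell V x \<subseteq> S"
proof
  fix a assume a: "a \<in> voronoi_cell V x"
  show "a \<in> S"
  proof (rule ccontr)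
    assume "a \<notin> S"
    then have "\<alpha> \<le> infdist x (- S)"
      by (intro le_infdist_inner_set[OF x(1)]) auto
    then have far: "\<alpha> < infdist x (- S)"
      using x(2) by linarith
    have "x \<in> S"
    proof (rule ccontr)
      assume "x \<notin> S"
      then have "infdist x (- S) = 0"
        by simp
      then show False
        using far \<open>0 \<le> \<alpha>\<close> by linarith
    qed
    then obtain w where w: "w \<in> frontier S" "dist x a = dist x w + dist w a"
      using segment_meets_frontier \<open>a \<notin> S\<close> by blast
    have "w \<in> closure (- S)"
      using w(1) by (simp add: frontier_def closure_complement)
    then have "\<alpha> < dist x w"
      using far infdist_le_closure[of w "- S" x] by linarith
    obtain v' where v': "v' \<in> V" "dist w v' \<le> \<alpha>"
      using sealed_nearest_centre[OF seal V w(1)] .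
    have "dist a x \<le> dist a v'"
      using a v'(1) infdist_le[of v' V a] by (simp add: voronoi_cell_def)
    also have "\<dots> \<le> dist a w + dist w v'"
      by (rule dist_triangle)
    finally show False
      using w(2) \<open>\<alpha> < dist x w\<close> v'(2) dist_commute[of a x] dist_commute[of a w] by linarith
  qed
qed

lemma sealed_delaunay_neighbour_in_thicken:
  assumes "sealed \<alpha> S V" "closed V" "0 \<le> \<alpha>"
    and "x \<in> inner_set \<alpha> S" "infdist x (- S) \<noteq> \<alpha>" and "delaunay_edge V x y"
  shows "y \<in> thicken \<alpha> S"
proof -
  obtain a where a: "a \<in> voronoi_cell V x" "a \<in> voronoi_cell V y" and "y \<in> V"
    using assms(6) by (auto simp: delaunay_edge_def)
  moreover have "a \<in> S"
    using sealed_voronoi_cell_subset[OF assms(1-5)] a(1) by blast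
  ultimately show ?thesis
    using sealed_voronoi_centre_in_thicken assms(1-3) by blast
qed

section \<open>Level sets of distance functions in the plane are null\<close>

lemma inner_real2: "(v::pt) \<bullet> u = v$1 * u$1 + v$2 * u$2"
  by (simp add: inner_vec_def sum_2)

definition infdist_level_piece :: "pt set \<Rightarrow> real \<Rightarrow> pt \<Rightarrow> pt set" where
  "infdist_level_piece K \<alpha> e =
     {x. infdist x K = \<alpha> \<and> (\<exists>w\<in>K. dist x w = \<alpha> \<and> (w - x) \<bullet> e \<ge> \<alpha>/2)}"

text \<open>The real-number core of the cone estimate below: \<open>(a, b)\<close> are the coordinates of a short
  step \<open>v\<close>, \<open>(p, q)\<close> those of the vector \<open>u\<close> to a nearest point, and the last hypothesis is
  \<open>|v - u| \<ge> |u|\<close>.\<close>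

lemma cone_estimate_real:
  fixes a b p q \<alpha> :: real
  assumes "0 < \<alpha>" "0 \<le> a" "\<alpha>/2 \<le> p" "q\<^sup>2 \<le> \<alpha>\<^sup>2" "a\<^sup>2 + b\<^sup>2 < \<alpha>\<^sup>2/4"
    and "2 * (a * p + b * q) \<le> a\<^sup>2 + b\<^sup>2"
  shows "a \<le> 5 * \<bar>b\<bar>"
proof -
  have "\<bar>q\<bar> \<le> \<alpha>"
    using abs_le_square_iff[of q \<alpha>] assms(1,4) by simp
  then have "\<bar>b * q\<bar> \<le> \<bar>b\<bar> * \<alpha>"
    by (simp add: abs_mult mult_left_mono)
  then have bq: "- (\<bar>b\<bar> * \<alpha>) \<le> b * q"
    by linarith
  have quarter: "(\<alpha>/2)\<^sup>2 = \<alpha>\<^sup>2/4"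
    by (simp add: power_divide)
  have "a\<^sup>2 < (\<alpha>/2)\<^sup>2"
    using assms(5) quarter zero_le_power2[of b] by linarith
  then have "a < \<alpha>/2"
    using assms(1) power_less_imp_less_base by fastforce
  then have "a\<^sup>2 \<le> a * (\<alpha>/2)"
    using assms(2) mult_left_mono[of a "\<alpha>/2" a] by (simp add: power2_eq_square)
  have "b\<^sup>2 < (\<alpha>/2)\<^sup>2"
    using assms(5) quarter zero_le_power2[of a] by linarith
  then have "\<bar>b\<bar>\<^sup>2 < (\<alpha>/2)\<^sup>2"
    by (simp only: power2_abs)
  then have "\<bar>b\<bar> < \<alpha>/2"
    using assms(1) power_less_imp_less_base by fastforce
  then have "b\<^sup>2 \<le> \<bar>b\<bar> * (\<alpha>/2)"
    by (metis abs_ge_zero abs_mult_self_eq mult_left_mono power2_eq_square less_imp_le)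
  moreover have "a * (\<alpha>/2) \<le> a * p"
    using assms(2,3) by (rule mult_left_mono[rotated])
  ultimately have "a * \<alpha> \<le> 5 * (\<bar>b\<bar> * \<alpha>)"
    using assms(6) bq \<open>a\<^sup>2 \<le> a * (\<alpha>/2)\<close> by (simp add: field_simps)
  then show ?thesis
    using assms(1) by simp
qed

text \<open>Inside one piece, short steps are steep with respect to the direction \<open>e\<close>; the
  hypothesis on \<open>e, e'\<close> says they form an orthonormal basis.\<close>

lemma infdist_level_piece_cone_half:
  fixes e e' :: pt
  assumes basis: "\<And>v u. v \<bullet> u = (v \<bullet> e) * (u \<bullet> e) + (v \<bullet> e') * (u \<bullet> e')"
    and "0 < \<alpha>" and x: "x \<in> infdist_level_piece K \<alpha> e" and y: "infdist y K = \<alpha>"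
    and short: "norm (y - x) < \<alpha>/2" and "0 \<le> (y - x) \<bullet> e"
  shows "(y - x) \<bullet> e \<le> 5 * \<bar>(y - x) \<bullet> e'\<bar>"
proof -
  obtain w where w: "w \<in> K" "dist x w = \<alpha>" "\<alpha>/2 \<le> (w - x) \<bullet> e"
    using x by (auto simp: infdist_level_piece_def)
  define v u where "v = y - x" and "u = w - x"
  have uu: "u \<bullet> u = \<alpha>\<^sup>2"
    using w(2) by (simp add: u_def dist_norm power2_norm_eq_inner[symmetric] norm_minus_commute)
  have "\<alpha> \<le> dist y w"
    using y w(1) infdist_le by metis
  then have "\<alpha>\<^sup>2 \<le> (v - u) \<bullet> (v - u)"
    using \<open>0 < \<alpha>\<close> by (simp add: v_def u_def dist_norm power2_norm_eq_inner[symmetric] power_mono)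
  also have "\<dots> = v \<bullet> v - 2 * (v \<bullet> u) + u \<bullet> u"
    by (simp add: algebra_simps inner_commute)
  finally have "2 * (v \<bullet> u) \<le> v \<bullet> v"
    using uu by simp
  moreover have "v \<bullet> v < \<alpha>\<^sup>2/4"
  proof -
    have "(norm v)\<^sup>2 < (\<alpha>/2)\<^sup>2"
      using short by (simp add: v_def power_strict_mono)
    then show ?thesis
      by (simp add: power2_norm_eq_inner power_divide)
  qed
  moreover have "(u \<bullet> e')\<^sup>2 \<le> \<alpha>\<^sup>2"
    using basis[of u u] uu by (simp add: power2_eq_square)
  ultimately show ?thesis
    using cone_estimate_real[OF \<open>0 < \<alpha>\<close>, of "v \<bullet> e" "u \<bullet> e" "u \<bullet> e'" "v \<bullet> e'"]
      \<open>0 \<le> (y - x) \<bullet> e\<close> w(3) basis[of v v] basis[of v u]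
    by (simp add: v_def u_def power2_eq_square)
qed

lemma infdist_level_piece_cone:
  fixes e e' :: pt
  assumes basis: "\<And>v u. v \<bullet> u = (v \<bullet> e) * (u \<bullet> e) + (v \<bullet> e') * (u \<bullet> e')"
    and "0 < \<alpha>" and x: "x \<in> infdist_level_piece K \<alpha> e" and y: "y \<in> infdist_level_piece K \<alpha> e"
    and short: "norm (y - x) < \<alpha>/2"
  shows "\<bar>(y - x) \<bullet> e\<bar> \<le> 5 * \<bar>(y - x) \<bullet> e'\<bar>"
proof (cases "0 \<le> (y - x) \<bullet> e")
  case True
  then show ?thesis
    using infdist_level_piece_cone_half[OF basis \<open>0 < \<alpha>\<close> x _ short] y
    by (simp add: infdist_level_piece_def)
next
  case False
  then have "(x - y) \<bullet> e \<le> 5 * \<bar>(x - y) \<bullet> e'\<bar>"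
    using infdist_level_piece_cone_half[OF basis \<open>0 < \<alpha>\<close> y, of x] x short
    by (simp add: infdist_level_piece_def norm_minus_commute inner_diff_left)
  then show ?thesis
    using False by (simp add: inner_diff_left abs_minus_commute)
qed

lemma negligible_inverse_Lipschitz:
  fixes p :: "'a::euclidean_space \<Rightarrow> 'a"
  assumes "negligible (p ` U)" and "\<And>x y. x \<in> U \<Longrightarrow> y \<in> U \<Longrightarrow> norm (y - x) \<le> B * norm (p y - p x)"
  shows "negligible U"
proof -
  have inj: "inj_on p U"
    using assms(2) by (fastforce intro: inj_onI)
  have "negligible (inv_into U p ` p ` U)"
  proof (rule negligible_locally_Lipschitz_image[OF order.refl assms(1)])
    fix q assume "q \<in> p ` U"
    then show "\<exists>T B. open T \<and> q \<in> T \<and>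
        (\<forall>y\<in>p ` U \<inter> T. norm (inv_into U p y - inv_into U p q) \<le> B * norm (y - q))"
      using assms(2) by (intro exI[of _ UNIV] exI[of _ B]) (auto simp: inv_into_f_f[OF inj])
  qed
  then show ?thesis
    by (simp add: inv_into_image_cancel[OF inj])
qed

text \<open>Locally, a piece is the graph of a Lipschitz function over the line spanned by \<open>e'\<close>.\<close>

lemma negligible_infdist_level_piece:
  fixes e e' :: pt
  assumes basis: "\<And>v u. v \<bullet> u = (v \<bullet> e) * (u \<bullet> e) + (v \<bullet> e') * (u \<bullet> e')"
    and "0 < \<alpha>" and "e \<bullet> e' = 0" "e \<noteq> 0" "e' \<bullet> e' = 1"
  shows "negligible (infdist_level_piece K \<alpha> e)"
proof (rule locally_negligible_alt[THEN iffD2], intro ballI)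
  fix x0 assume x0: "x0 \<in> infdist_level_piece K \<alpha> e"
  define U where "U = infdist_level_piece K \<alpha> e \<inter> ball x0 (\<alpha>/4)"
  define p where "p v = (v \<bullet> e') *\<^sub>R e'" for v :: pt
  have lip: "norm (y - x) \<le> 6 * norm (p y - p x)" if "x \<in> U" "y \<in> U" for x y
  proof -
    define c where "c = (y - x) \<bullet> e'"
    have "dist x0 x < \<alpha>/4" "dist x0 y < \<alpha>/4"
      using that by (auto simp: U_def)
    then have "norm (y - x) < \<alpha>/2"
      using dist_triangle[of x y x0] by (simp add: dist_commute dist_norm norm_minus_commute)
    moreover have "x \<in> infdist_level_piece K \<alpha> e" "y \<in> infdist_level_piece K \<alpha> e"
      using that by (simp_all add: U_def)
    ultimately have "\<bar>(y - x) \<bullet> e\<bar> \<le> 5 * \<bar>c\<bar>"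
      using infdist_level_piece_cone[OF basis \<open>0 < \<alpha>\<close>] by (simp add: c_def)
    then have "((y - x) \<bullet> e)\<^sup>2 \<le> (5 * \<bar>c\<bar>)\<^sup>2"
      by (metis abs_ge_zero power2_abs power_mono)
    moreover have "(norm (y - x))\<^sup>2 = ((y - x) \<bullet> e)\<^sup>2 + c\<^sup>2"
      unfolding power2_norm_eq_inner by (subst basis) (simp add: c_def power2_eq_square)
    moreover have "(5 * \<bar>c\<bar>)\<^sup>2 = 25 * c\<^sup>2" "(6 * \<bar>c\<bar>)\<^sup>2 = 36 * c\<^sup>2"
      by (simp_all add: power_mult_distrib)
    ultimately have "(norm (y - x))\<^sup>2 \<le> (6 * \<bar>c\<bar>)\<^sup>2"
      using zero_le_power2[of c] by linarith
    then have "norm (y - x) \<le> 6 * \<bar>c\<bar>"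
      by (rule power2_le_imp_le) simp
    moreover have "norm (p y - p x) = \<bar>c\<bar>"
      using \<open>e' \<bullet> e' = 1\<close>
      by (simp add: p_def c_def inner_diff_left flip: scaleR_diff_left) (simp add: norm_eq_sqrt_inner)
    ultimately show ?thesis
      by simp
  qed
  have "p ` U \<subseteq> {v. e \<bullet> v = 0}"
    using \<open>e \<bullet> e' = 0\<close> by (auto simp: p_def)
  then have "negligible (p ` U)"
    using negligible_hyperplane[of e 0] \<open>e \<noteq> 0\<close> negligible_subset by blast
  then have "negligible U"
    using lip by (rule negligible_inverse_Lipschitz)
  moreover have "openin (top_of_set (infdist_level_piece K \<alpha> e)) U"
    by (simp add: U_def openin_open_Int)
  moreover have "x0 \<in> U"
    using x0 \<open>0 < \<alpha>\<close> by (simp add: U_def)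
  ultimately show "\<exists>U. openin (top_of_set (infdist_level_piece K \<alpha> e)) U \<and> x0 \<in> U \<and> negligible U"
    by blast
qed

lemma inner_axis_1: "(v::pt) \<bullet> axis 1 1 = v$1"
  by (simp add: inner_axis)

lemma inner_axis_2: "(v::pt) \<bullet> axis 2 1 = v$2"
  by (simp add: inner_axis)

lemma infdist_level_subset_pieces:
  assumes "closed K" "K \<noteq> {}"
  shows "{x. infdist x K = \<alpha>} \<subseteq>
    infdist_level_piece K \<alpha> (axis 1 1) \<union> infdist_level_piece K \<alpha> (- axis 1 1) \<union>
    infdist_level_piece K \<alpha> (axis 2 1) \<union> infdist_level_piece K \<alpha> (- axis 2 1)"
proof
  fix x assume x: "x \<in> {x. infdist x K = \<alpha>}"
  obtain w where w: "w \<in> K" "infdist x K = dist x w"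
    using infdist_attains_inf[OF assms] by blast
  define u where "u = w - x"
  have "u \<bullet> u = \<alpha>\<^sup>2"
    using w x by (simp add: u_def dist_norm power2_norm_eq_inner[symmetric] norm_minus_commute)
  then have u: "(u$1)\<^sup>2 + (u$2)\<^sup>2 = \<alpha>\<^sup>2"
    by (simp add: inner_real2 power2_eq_square)
  have "\<alpha>/2 \<le> u$1 \<or> \<alpha>/2 \<le> - u$1 \<or> \<alpha>/2 \<le> u$2 \<or> \<alpha>/2 \<le> - u$2"
  proof (rule ccontr)
    assume "\<not> ?thesis"
    then have "\<bar>u$1\<bar> < \<alpha>/2" "\<bar>u$2\<bar> < \<alpha>/2"
      by auto
    then have "\<bar>u$1\<bar>\<^sup>2 < (\<alpha>/2)\<^sup>2" "\<bar>u$2\<bar>\<^sup>2 < (\<alpha>/2)\<^sup>2"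
      by (simp_all only: power_strict_mono abs_ge_zero zero_less_numeral)
    then have "(u$1)\<^sup>2 + (u$2)\<^sup>2 < \<alpha>\<^sup>2/2"
      by (simp add: power_divide power2_abs)
    then show False
      using u zero_le_power2[of \<alpha>] by linarith
  qed
  then show "x \<in> infdist_level_piece K \<alpha> (axis 1 1) \<union> infdist_level_piece K \<alpha> (- axis 1 1) \<union>
    infdist_level_piece K \<alpha> (axis 2 1) \<union> infdist_level_piece K \<alpha> (- axis 2 1)"
    using x w unfolding infdist_level_piece_def u_def
    by (auto simp: inner_axis_1 inner_axis_2)
qed

lemma negligible_infdist_level:
  fixes K :: "pt set"
  assumes "0 < \<alpha>"
  shows "negligible {x. infdist x K = \<alpha>}"
proof (cases "K = {}")
  case False
  let ?e1 = "axis 1 1 :: pt" and ?e2 = "axis 2 1 :: pt" and ?L = "infdist_level_piece (closure K) \<alpha>"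
  have basis1: "v \<bullet> u = (v \<bullet> e) * (u \<bullet> e) + (v \<bullet> ?e2) * (u \<bullet> ?e2)"
    if "e = ?e1 \<or> e = - ?e1" for e v u
    using that by (auto simp: inner_axis_1 inner_axis_2) (simp_all add: inner_real2)
  have basis2: "v \<bullet> u = (v \<bullet> e) * (u \<bullet> e) + (v \<bullet> ?e1) * (u \<bullet> ?e1)"
    if "e = ?e2 \<or> e = - ?e2" for e v u
    using that by (auto simp: inner_axis_1 inner_axis_2) (simp_all add: inner_real2 algebra_simps)
  have "?e1 \<bullet> ?e2 = 0" "?e1 \<bullet> ?e1 = 1" "?e2 \<bullet> ?e2 = 1" "?e1 \<noteq> 0" "?e2 \<noteq> 0"
    by (simp_all add: inner_axis_1 inner_axis_2 axis_eq_0_iff) (simp add: axis_def)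
  then have "negligible (?L e)" if "e = ?e1 \<or> e = - ?e1 \<or> e = ?e2 \<or> e = - ?e2" for e
    using that negligible_infdist_level_piece[OF basis1 assms, of e]
      negligible_infdist_level_piece[OF basis2 assms, of e]
    by (auto simp: inner_commute)
  then have "negligible (?L ?e1 \<union> ?L (- ?e1) \<union> ?L ?e2 \<union> ?L (- ?e2))"
    by (intro negligible_Un) auto
  moreover have "{x. infdist x K = \<alpha>} \<subseteq> ?L ?e1 \<union> ?L (- ?e1) \<union> ?L ?e2 \<union> ?L (- ?e2)"
    using infdist_level_subset_pieces[of "closure K" \<alpha>] False by (simp add: infdist_closure)
  ultimately show ?thesis
    by (rule negligible_subset)
qed (use assms in \<open>simp add: infdist_def\<close>)

lemma infdist_level_null_sets:
  fixes K :: "pt set"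
  assumes "0 < \<alpha>"
  shows "{x. infdist x K = \<alpha>} \<in> null_sets lborel"
proof -
  have "{x. infdist x K = \<alpha>} \<in> sets lborel"
    unfolding sets_lborel
    by (intro borel_closed closed_Collect_eq continuous_on_infdist continuous_on_const
        continuous_on_id)
  then show ?thesis
    using negligible_infdist_level[OF assms, of K]
    by (simp add: negligible_iff_null_sets null_sets_completion_iff)
qed

section \<open>Poisson processes avoid null sets\<close>

lemma poisson_process_AE_disjoint_null_set:
  assumes pp: "poisson_process M V" and N: "N \<in> null_sets lborel"
  shows "AE \<omega> in M. V \<omega> \<inter> N = {}"
proof -
  interpret prob_space M
    using pp by (simp add: poisson_process_def)
  define A where "A n = N \<inter> cball 0 (real n)" for n :: nat
  have "AE \<omega> in M. card (V \<omega> \<inter> A n) = 0" for n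
  proof -
    have A: "A n \<in> sets lborel" "bounded (A n)"
      using N by (auto simp: A_def)
    then have "A n \<in> null_sets lborel"
      using N by (auto simp: A_def intro: null_sets_subset)
    then have "measure lborel (A n) = 0"
      by (rule measure_eq_0_null_sets)
    moreover have "prob {\<omega>\<in>space M. card (V \<omega> \<inter> A n) = 0} =
        (measure lborel (A n)) ^ 0 / fact 0 * exp (- measure lborel (A n))"
      using pp A unfolding poisson_process_def by blast
    ultimately have "prob {\<omega>\<in>space M. card (V \<omega> \<inter> A n) = 0} = 1"
      by simp
    then show ?thesis
      by (auto elim: eventually_mono dest: AE_prob_1)
  qed
  then have "AE \<omega> in M. \<forall>n. card (V \<omega> \<inter> A n) = 0"
    by (simp add: AE_all_countable)
  then show ?thesis
  proof (rule AE_mp[OF _ AE_I2], intro impI)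
    fix \<omega> assume "\<omega> \<in> space M" and empty: "\<forall>n. card (V \<omega> \<inter> A n) = 0"
    have "finite (V \<omega> \<inter> A n)" for n
      using pp \<open>\<omega> \<in> space M\<close> by (auto simp: poisson_process_def A_def bounded_Int)
    then have "V \<omega> \<inter> A n = {}" for n
      using empty by simp
    moreover have "x \<in> A (nat \<lceil>norm x\<rceil>)" if "x \<in> N" for x
      using that by (simp add: A_def)
    ultimately show "V \<omega> \<inter> N = {}"
      by blast
  qed
qed

theorem lemma9:
  fixes M :: "'a measure" and V :: "'a \<Rightarrow> pt set" and S :: "pt set" and \<alpha> :: real
  assumes "poisson_process M V" and "\<alpha> > 0"
  shows "AE \<omega> in M. sealed \<alpha> S (V \<omega>) \<longrightarrow>
           ((\<forall>z\<in>inner_set \<alpha> S. voronoi_map (V \<omega>) z = voronoi_map (V \<omega> \<inter> thicken \<alpha> S) z) \<and>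
            (\<forall>x\<in>V \<omega> \<inter> inner_set \<alpha> S.
                voronoi_cell (V \<omega>) x \<subseteq> thicken \<alpha> S \<and>
                (\<forall>y. delaunay_edge (V \<omega>) x y \<longrightarrow> y \<in> thicken \<alpha> S)))"
proof -
  have "AE \<omega> in M. V \<omega> \<inter> {x. infdist x (- S) = \<alpha>} = {}"
    using poisson_process_AE_disjoint_null_set[OF assms(1) infdist_level_null_sets[OF assms(2)]] .
  then show ?thesis
  proof (rule AE_mp[OF _ AE_I2], intro impI)
    fix \<omega> assume "\<omega> \<in> space M" and avoid: "V \<omega> \<inter> {x. infdist x (- S) = \<alpha>} = {}"
      and seal: "sealed \<alpha> S (V \<omega>)"
    have closed: "closed (V \<omega>)"
      using assms(1) \<open>\<omega> \<in> space M\<close> by (intro locally_finite_imp_closed) (simp add: poisson_process_def)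
    note \<alpha> = less_imp_le[OF assms(2)]
    show "(\<forall>z\<in>inner_set \<alpha> S. voronoi_map (V \<omega>) z = voronoi_map (V \<omega> \<inter> thicken \<alpha> S) z) \<and>
            (\<forall>x\<in>V \<omega> \<inter> inner_set \<alpha> S.
                voronoi_cell (V \<omega>) x \<subseteq> thicken \<alpha> S \<and>
                (\<forall>y. delaunay_edge (V \<omega>) x y \<longrightarrow> y \<in> thicken \<alpha> S))"
      using sealed_voronoi_map_Int_thicken[OF seal closed \<alpha>] inner_set_subset[OF assms(2)]
        sealed_voronoi_cell_subset[OF seal closed \<alpha>] subset_thicken[OF \<alpha>]
        sealed_delaunay_neighbour_in_thicken[OF seal closed \<alpha>] avoid
      by blast
  qed
qed

end
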